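(* Assume the Population Invariant holds at all times and $n_0$ is sufficiently large (in particular $n_0\ge 40$). Then with high probability, for every interval $(t,t']$, the number $a$ of good IDs that join during the interval satisfies $a\le 23|S(t)|+4$.
   Context: Model. Time is continuous. At each time $x$ the system consists of a finite set $S(x)$ of IDs partitioned into good IDs $G(x)$ and bad IDs $B(x)=S(x)\setminus G(x)$. Membership changes only by join events (a new ID, never previously present, is added) and departure events (one ID removed), each at a distinct time. $|G(x)|\ge n_0$ for all $x$. Whenever a good ID departs (the adversary may choose when), the departing ID is chosen independently and uniformly at random from the set of good IDs currently in the system. Population Invariant: $|B(x)|<\frac16|S(x)|$ for all $x$. $A\triangle B$ is symmetric difference. The system lifetime consists of $n_0^{\gamma}$ join/departure events for a fixed constant $\gamma>0$; "with high probability" means with probability at least $1-O(1/n_0)$ over the system lifetime. Intervals: an interval beginning at time $t$ ends at the first time $t'>t$ with $|S(t')\triangle S(t)|\ge\frac58|S(t')|$ (so $|S(t')\triangle S(t)|=\lceil\frac58|S(t')|\rceil$), and the next interval starts at $t'$. *)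

theory Defs
  imports "HOL-Probability.Probability"
begin

text \<open>
  A state is a triple (G, B, k):
  G = set of good IDs present, B = set of bad IDs present, k = a counter such that
  every ID ever present is < k (so ID k is guaranteed never to have been present).
  Time is indexed by the number of join/departure events so far; state i of a
  trajectory is the system state after the i-th event.
\<close>

type_synonym st = "nat set \<times> nat set \<times> nat"

definition goodS :: "st \<Rightarrow> nat set" where "goodS s = fst s"
definition badS  :: "st \<Rightarrow> nat set" where "badS s = fst (snd s)"
definition allS  :: "st \<Rightarrow> nat set" where "allS s = goodS s \<union> badS s"
definition ctr   :: "st \<Rightarrow> nat" where "ctr s = snd (snd s)"

datatype act = JoinGood | JoinBad | DepartBad nat | DepartGood

definition step :: "act \<Rightarrow> st \<Rightarrow> st pmf" where
  "step a s = (case a of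
      JoinGood \<Rightarrow> return_pmf (insert (ctr s) (goodS s), badS s, Suc (ctr s))
    | JoinBad \<Rightarrow> return_pmf (goodS s, insert (ctr s) (badS s), Suc (ctr s))
    | DepartBad x \<Rightarrow> return_pmf (goodS s, badS s - {x}, ctr s)
    | DepartGood \<Rightarrow> map_pmf (\<lambda>y. (goodS s - {y}, badS s, ctr s)) (pmf_of_set (goodS s)))"

definition legal :: "act \<Rightarrow> st \<Rightarrow> bool" where
  "legal a s = (case a of
      DepartBad x \<Rightarrow> x \<in> badS s
    | DepartGood \<Rightarrow> goodS s \<noteq> {}
    | _ \<Rightarrow> True)"

text \<open>An (adaptive) adversary maps the history so far (list of states, oldest first)
  to the next action.  traj adv s0 n is the distribution of the history after n events.\<close>
primrec traj :: "(st list \<Rightarrow> act) \<Rightarrow> st \<Rightarrow> nat \<Rightarrow> st list pmf" where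
  "traj adv s0 0 = return_pmf [s0]"
| "traj adv s0 (Suc n) =
     bind_pmf (traj adv s0 n) (\<lambda>h. map_pmf (\<lambda>s. h @ [s]) (step (adv h) (last h)))"

definition wf_init :: "st \<Rightarrow> bool" where
  "wf_init s \<longleftrightarrow> finite (goodS s) \<and> finite (badS s) \<and> goodS s \<inter> badS s = {}
                 \<and> (\<forall>x \<in> allS s. x < ctr s)"

definition invs :: "nat \<Rightarrow> st \<Rightarrow> bool" where
  "invs n0 s \<longleftrightarrow> n0 \<le> card (goodS s) \<and> 6 * card (badS s) < card (allS s)"

definition admissible :: "nat \<Rightarrow> nat \<Rightarrow> (st list \<Rightarrow> act) \<Rightarrow> st \<Rightarrow> bool" where
  "admissible n0 L adv s0 \<longleftrightarrow> wf_init s0 \<and>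
     (\<forall>h \<in> set_pmf (traj adv s0 L).
        (\<forall>i \<le> L. invs n0 (h ! i)) \<and> (\<forall>i < L. legal (adv (take (Suc i) h)) (h ! i)))"

definition ends_at :: "st list \<Rightarrow> nat \<Rightarrow> nat \<Rightarrow> bool" where
  "ends_at h t t' \<longleftrightarrow> t < t' \<and> t' < length h \<and>
     8 * card (allS (h ! t') - allS (h ! t) \<union> (allS (h ! t) - allS (h ! t'))) \<ge> 5 * card (allS (h ! t'))
     \<and> (\<forall>u. t < u \<and> u < t' \<longrightarrow>
          \<not> 8 * card (allS (h ! u) - allS (h ! t) \<union> (allS (h ! t) - allS (h ! u))) \<ge> 5 * card (allS (h ! u)))"

inductive interval_start :: "st list \<Rightarrow> nat \<Rightarrow> bool" for h where
  "interval_start h 0"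
| "interval_start h t \<Longrightarrow> ends_at h t t' \<Longrightarrow> interval_start h t'"

definition is_interval :: "st list \<Rightarrow> nat \<Rightarrow> nat \<Rightarrow> bool" where
  "is_interval h t t' \<longleftrightarrow> interval_start h t \<and> ends_at h t t'"

text \<open>Number of good joins during the interval (t,t'], i.e. at events t+1, ..., t'.\<close>
definition good_joins :: "(st list \<Rightarrow> act) \<Rightarrow> st list \<Rightarrow> nat \<Rightarrow> nat \<Rightarrow> nat" where
  "good_joins adv h t t' = card {m. t \<le> m \<and> m < t' \<and> adv (take (Suc m) h) = JoinGood}"

definition lifetime :: "real \<Rightarrow> nat \<Rightarrow> nat" where
  "lifetime \<gamma> n0 = nat \<lfloor>real n0 powr \<gamma>\<rfloor>"

end

theory Submission
  imports Defs "HOL-Real_Asymp.Real_Asymp"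
begin

text \<open>
  Fix a start time \<open>t\<close>, write \<open>S = S(t)\<close>, and weigh a later state \<open>x\<close> by
  \<open>(1/5)^|S - S(x)| \<cdot> (5/6)^|G(x) - S|\<close>.  While the interval is running,
  \<open>|S(x) \<triangle> S| < 5/8 |S(x)|\<close> together with \<open>|B(x)| < |S(x)|/6\<close> gives
  \<open>|G(x) - S| \<le> 4 |G(x) \<inter> S|\<close>; hence a uniformly random good departure does not increase the
  weight in expectation, and \<open>(6/5)^a\<close> times the weight, with \<open>a\<close> the number of good joins so
  far, is a supermartingale.  Once \<open>a\<close> reaches \<open>23|S| + 4\<close> inside the interval we have
  \<open>|S(x)| < 8/3 |S|\<close>, so this product is at least \<open>((6/5)^20 / 5)^|S| \<ge> 2^n\<^sub>0\<close>.
  Markov's inequality bounds the probability of this by \<open>2^-n\<^sub>0\<close> for each start time, and a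
  union bound over the \<open>n\<^sub>0^\<gamma> + 1\<close> possible start times gives \<open>O(1/n\<^sub>0)\<close>.
\<close>

lemma length_traj: "h \<in> set_pmf (traj adv s0 n) \<Longrightarrow> length h = Suc n"
  by (induction n arbitrary: h) auto

lemma wf_init_step:
  assumes "s \<in> set_pmf (step a x)" "wf_init x"
  shows "wf_init s \<and> ctr x \<le> ctr s"
proof (cases a)
  case DepartGood
  then obtain y where "s = (goodS x - {y}, badS x, ctr x)"
    using assms(1) by (auto simp: step_def)
  then show ?thesis using assms(2) by (auto simp: wf_init_def goodS_def badS_def allS_def ctr_def)
qed (use assms in \<open>auto simp: step_def wf_init_def goodS_def badS_def allS_def ctr_def less_Suc_eq\<close>)

lemma wf_init_traj:
  assumes "h \<in> set_pmf (traj adv s0 n)" "wf_init s0"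
  shows "(\<forall>i\<le>n. wf_init (h!i)) \<and> (\<forall>i j. i \<le> j \<and> j \<le> n \<longrightarrow> ctr (h!i) \<le> ctr (h!j))"
  using assms(1)
proof (induction n arbitrary: h)
  case 0
  then show ?case using assms(2) by auto
next
  case (Suc n)
  then obtain g s where g: "g \<in> set_pmf (traj adv s0 n)" and s: "s \<in> set_pmf (step (adv g) (last g))"
    and h: "h = g @ [s]" by auto
  note IH = Suc.IH[OF g]
  have len: "length g = Suc n" using length_traj[OF g] .
  then have "last g = g ! n" by (metis diff_Suc_1 last_conv_nth list.size(3) nat.distinct(1))
  then have s_wf: "wf_init s \<and> ctr (g!n) \<le> ctr s" using wf_init_step s IH by auto
  have nth: "\<And>i. i \<le> Suc n \<Longrightarrow> h ! i = (if i \<le> n then g ! i else s)"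
    using len h by (auto simp: nth_append)
  show ?case
  proof (intro conjI allI impI)
    fix i assume "i \<le> Suc n" then show "wf_init (h!i)" using nth IH s_wf by auto
  next
    fix i j assume ij: "i \<le> j \<and> j \<le> Suc n"
    show "ctr (h!i) \<le> ctr (h!j)"
    proof (cases "j \<le> n")
      case True then show ?thesis using ij nth IH by auto
    next
      case False
      then have "j = Suc n" using ij by auto
      then show ?thesis using ij nth IH s_wf
        by (cases "i \<le> n") (auto, meson le_refl order_trans)
    qed
  qed
qed

lemma nn_integral_traj_le:
  assumes "\<And>h. h \<noteq> [] \<Longrightarrow> (\<integral>\<^sup>+ s. V (h @ [s]) \<partial>step (adv h) (last h)) \<le> V h"
  shows "(\<integral>\<^sup>+ h. V h \<partial>traj adv s0 n) \<le> V [s0]"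
proof (induction n)
  case 0 then show ?case by simp
next
  case (Suc n)
  have "(\<integral>\<^sup>+ h. V h \<partial>traj adv s0 (Suc n))
      = (\<integral>\<^sup>+ h. (\<integral>\<^sup>+ s. V (h @ [s]) \<partial>step (adv h) (last h)) \<partial>traj adv s0 n)"
    by simp
  also have "\<dots> \<le> (\<integral>\<^sup>+ h. V h \<partial>traj adv s0 n)"
  proof (rule nn_integral_mono_AE)
    show "AE h in traj adv s0 n. (\<integral>\<^sup>+ s. V (h @ [s]) \<partial>step (adv h) (last h)) \<le> V h"
      unfolding AE_measure_pmf_iff
    proof
      fix h assume "h \<in> set_pmf (traj adv s0 n)"
      then have "h \<noteq> []" using length_traj by fastforce
      then show "(\<integral>\<^sup>+ s. V (h @ [s]) \<partial>step (adv h) (last h)) \<le> V h" by (rule assms)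
    qed
  qed
  also have "\<dots> \<le> V [s0]" by (rule Suc.IH)
  finally show ?case .
qed

lemma prob_traj_ge_le:
  fixes V :: "st list \<Rightarrow> real"
  assumes super: "\<And>h. h \<noteq> [] \<Longrightarrow>
      (\<integral>\<^sup>+ s. ennreal (V (h @ [s])) \<partial>step (adv h) (last h)) \<le> ennreal (V h)"
    and "V [s0] \<ge> 0" and "c > 0"
  shows "measure_pmf.prob (traj adv s0 n) {h. c \<le> V h} \<le> V [s0] / c"
proof -
  let ?A = "{h. c \<le> V h}"
  let ?M = "measure_pmf (traj adv s0 n)"
  have "ennreal c * emeasure ?M ?A = (\<integral>\<^sup>+ h. ennreal c * indicator ?A h \<partial>?M)"
    by (simp add: nn_integral_cmult_indicator)
  also have "\<dots> \<le> (\<integral>\<^sup>+ h. ennreal (V h) \<partial>?M)"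
    by (intro nn_integral_mono) (auto simp: indicator_def ennreal_leI)
  also have "\<dots> \<le> ennreal (V [s0])" by (rule nn_integral_traj_le[OF super])
  finally have "ennreal (c * measure_pmf.prob (traj adv s0 n) ?A) \<le> ennreal (V [s0])"
    using \<open>c > 0\<close> by (simp add: measure_pmf.emeasure_eq_measure ennreal_mult')
  then have "c * measure_pmf.prob (traj adv s0 n) ?A \<le> V [s0]"
    using \<open>V [s0] \<ge> 0\<close> by (simp add: ennreal_le_iff)
  then show ?thesis using \<open>c > 0\<close> by (simp add: field_simps mult.commute)
qed

text \<open>The balance \<open>mu + 4 lam = 5\<close> is what makes a random good departure harmless.\<close>

definition lam :: real where "lam = 6/5"
definition mu :: real where "mu = 1/5"

definition potential :: "st \<Rightarrow> st \<Rightarrow> real" where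
  "potential T x = mu ^ card (allS T - allS x) / lam ^ card (goodS x - allS T)"

definition small_drift :: "st \<Rightarrow> st \<Rightarrow> bool" where
  "small_drift T x \<longleftrightarrow> 8 * card (allS x - allS T \<union> (allS T - allS x)) < 5 * card (allS x)"

definition regular :: "nat \<Rightarrow> st \<Rightarrow> st \<Rightarrow> bool" where
  "regular n0 T x \<longleftrightarrow> invs n0 x \<and> wf_init x \<and> finite (allS T) \<and> (\<forall>y\<in>allS T. y < ctr x)
                      \<and> small_drift T x"

lemma potential_nonneg: "potential T x \<ge> 0"
  by (simp add: potential_def lam_def mu_def)

lemma potential_self: "potential x x = 1"
proof -
  have "goodS x - allS x = {}" by (auto simp: allS_def)
  then have "card (goodS x - allS x) = 0" by (simp only: card.empty)
  then show ?thesis by (simp add: potential_def)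
qed

lemma potential_triple:
  "potential T (G, B, c) = mu ^ card (allS T - (G \<union> B)) / lam ^ card (G - allS T)"
  by (simp add: potential_def allS_def goodS_def badS_def)

lemma card_good_diff_le:
  assumes "wf_init x" "finite (allS T)" "6 * card (badS x) < card (allS x)" "small_drift T x"
  shows "card (goodS x - allS T) \<le> 4 * card (goodS x \<inter> allS T)"
proof -
  define G where "G = goodS x"
  define B where "B = badS x"
  define U where "U = allS T"
  have S: "allS x = G \<union> B" by (simp add: G_def B_def allS_def)
  have fG: "finite G" and fB: "finite B" and dis: "G \<inter> B = {}" and fU: "finite U"
    using assms by (auto simp: wf_init_def G_def B_def U_def)
  have inv: "6 * card B < card (G \<union> B)"
    using assms S by (simp add: B_def)
  have drift: "8 * card ((G \<union> B) - U \<union> (U - (G \<union> B))) < 5 * card (G \<union> B)"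
    using assms S by (simp add: small_drift_def U_def)
  have cG: "card G = card (G \<inter> U) + card (G - U)" and cB: "card B = card (B \<inter> U) + card (B - U)"
    using card_Int_Diff fG fB by auto
  have cGB: "card (G \<union> B) = card G + card B" using card_Un_disjoint[OF fG fB dis] .
  have cD: "card ((G \<union> B) - U \<union> (U - (G \<union> B))) = card (G - U) + card (B - U) + card (U - (G \<union> B))"
  proof -
    have "card ((G \<union> B) - U \<union> (U - (G \<union> B))) = card ((G - U) \<union> (B - U)) + card (U - (G \<union> B))"
      by (subst card_Un_disjoint) (use fG fB fU in \<open>auto simp: Un_Diff\<close>)
    also have "card ((G - U) \<union> (B - U)) = card (G - U) + card (B - U)"
      by (rule card_Un_disjoint) (use fG fB dis in auto)
    finally show ?thesis .
  qed
  show ?thesis using inv drift cG cB cGB cD unfolding G_def[symmetric] U_def[symmetric] by linarith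
qed

lemma sum_potential_depart_good_le:
  assumes "wf_init x" "finite (allS T)"
    and ratio: "card (goodS x - allS T) \<le> 4 * card (goodS x \<inter> allS T)"
  shows "(\<Sum>y\<in>goodS x. potential T (goodS x - {y}, badS x, ctr x)) \<le> card (goodS x) * potential T x"
proof -
  define G where "G = goodS x"
  define B where "B = badS x"
  define U where "U = allS T"
  have fG: "finite G" and dis: "G \<inter> B = {}" and fU: "finite U"
    using assms by (auto simp: wf_init_def G_def B_def U_def)
  define P where "P = potential T x"
  have P: "P = mu ^ card (U - (G \<union> B)) / lam ^ card (G - U)"
    by (simp add: P_def potential_def G_def B_def U_def allS_def)
  have lose_old: "potential T (G - {y}, B, c) = mu * P" if "y \<in> G \<inter> U" for y c
  proof -
    have "U - (G - {y} \<union> B) = insert y (U - (G \<union> B))" using that dis by auto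
    moreover have "G - {y} - U = G - U" using that by auto
    ultimately show ?thesis using fU that by (simp add: potential_triple P U_def[symmetric])
  qed
  have lose_new: "potential T (G - {y}, B, c) = lam * P" if "y \<in> G - U" for y c
  proof -
    have "U - (G - {y} \<union> B) = U - (G \<union> B)" using that by auto
    moreover have "G - {y} - U = (G - U) - {y}" by auto
    moreover have "card (G - U) = Suc (card ((G - U) - {y}))"
      using that fG by (metis card_Suc_Diff1 finite_Diff)
    ultimately show ?thesis by (simp add: potential_triple P U_def[symmetric] lam_def)
  qed
  have "(\<Sum>y\<in>G. potential T (G - {y}, B, ctr x))
      = (\<Sum>y\<in>G \<inter> U. potential T (G - {y}, B, ctr x)) + (\<Sum>y\<in>G - U. potential T (G - {y}, B, ctr x))"
    using sum.Int_Diff[OF fG] by blast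
  also have "\<dots> = (real (card (G \<inter> U)) * mu + real (card (G - U)) * lam) * P"
    using lose_old lose_new by (simp add: algebra_simps)
  also have "\<dots> \<le> real (card G) * P"
  proof (rule mult_right_mono)
    have "card G = card (G \<inter> U) + card (G - U)" using card_Int_Diff[OF fG] by simp
    then show "real (card (G \<inter> U)) * mu + real (card (G - U)) * lam \<le> real (card G)"
      using ratio by (simp add: lam_def mu_def G_def U_def)
  qed (simp add: P_def potential_nonneg)
  finally show ?thesis by (simp add: G_def B_def P_def)
qed

lemma nn_integral_potential_depart_good:
  assumes "wf_init x" "finite (allS T)" "goodS x \<noteq> {}"
    and "card (goodS x - allS T) \<le> 4 * card (goodS x \<inter> allS T)"
  shows "(\<integral>\<^sup>+ s. ennreal (potential T s) \<partial>step DepartGood x) \<le> ennreal (potential T x)"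
proof -
  define G where "G = goodS x"
  define f where "f y = potential T (G - {y}, badS x, ctr x)" for y
  have fG: "finite G" and Gne: "G \<noteq> {}" using assms by (auto simp: wf_init_def G_def)
  have "(\<integral>\<^sup>+ s. ennreal (potential T s) \<partial>step DepartGood x) = (\<integral>\<^sup>+ y. ennreal (f y) \<partial>pmf_of_set G)"
    by (simp add: step_def G_def f_def)
  also have "\<dots> = (\<Sum>y\<in>G. ennreal (f y)) / card G"
    by (rule nn_integral_pmf_of_set) (use Gne fG in auto)
  also have "\<dots> = ennreal (sum f G / card G)"
    using fG Gne potential_nonneg
    by (simp add: f_def sum_nonneg divide_ennreal[symmetric] ennreal_of_nat_eq_real_of_nat card_gt_0_iff)
  also have "\<dots> \<le> ennreal (potential T x)"
    using sum_potential_depart_good_le[OF assms(1,2,4)] fG Gne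
    by (intro ennreal_leI) (simp add: f_def G_def divide_le_eq card_gt_0_iff mult.commute)
  finally show ?thesis .
qed

lemma nn_integral_potential_step:
  assumes reg: "regular n0 T x" and "n0 \<ge> 1"
  shows "(\<integral>\<^sup>+ s. ennreal (lam ^ (if a = JoinGood then 1 else 0) * potential T s) \<partial>step a x)
         \<le> ennreal (potential T x)"
proof -
  define G where "G = goodS x"
  define B where "B = badS x"
  define U where "U = allS T"
  define c where "c = ctr x"
  have x: "x = (G, B, c)" by (simp add: G_def B_def c_def goodS_def badS_def ctr_def)
  have fG: "finite G" and fU: "finite U" and fresh: "c \<notin> G \<union> B" "c \<notin> U"
    using reg by (auto simp: regular_def wf_init_def G_def B_def U_def allS_def c_def)
  have Px: "potential T x = mu ^ card (U - (G \<union> B)) / lam ^ card (G - U)"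
    by (simp add: x potential_triple U_def)
  show ?thesis
  proof (cases a)
    case JoinGood
    have "insert c G - U = insert c (G - U)" "U - (insert c G \<union> B) = U - (G \<union> B)"
      using fresh by auto
    then have "lam * potential T (insert c G, B, Suc c) = potential T x"
      using fG fresh by (simp add: potential_triple Px U_def[symmetric] lam_def)
    then show ?thesis using JoinGood by (simp add: step_def x goodS_def badS_def ctr_def)
  next
    case JoinBad
    have "U - (G \<union> insert c B) = U - (G \<union> B)" using fresh by auto
    then have "potential T (G, insert c B, Suc c) = potential T x"
      by (simp add: potential_triple Px U_def[symmetric])
    then show ?thesis using JoinBad by (simp add: step_def x goodS_def badS_def ctr_def)
  next
    case (DepartBad z)
    have "card (U - (G \<union> B)) \<le> card (U - (G \<union> (B - {z})))"
      by (rule card_mono) (use fU in auto)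
    then have "mu ^ card (U - (G \<union> (B - {z}))) \<le> mu ^ card (U - (G \<union> B))"
      by (intro power_decreasing) (auto simp: mu_def)
    then have "potential T (G, B - {z}, c) \<le> potential T x"
      by (simp add: potential_triple Px U_def[symmetric] divide_right_mono lam_def)
    then show ?thesis using DepartBad by (simp add: step_def x goodS_def badS_def ctr_def ennreal_leI)
  next
    case DepartGood
    have "goodS x \<noteq> {}" using reg \<open>n0 \<ge> 1\<close> by (auto simp: regular_def invs_def)
    moreover have "card (goodS x - allS T) \<le> 4 * card (goodS x \<inter> allS T)"
      using reg by (intro card_good_diff_le) (auto simp: regular_def invs_def)
    ultimately show ?thesis
      using DepartGood reg nn_integral_potential_depart_good by (simp add: regular_def)
  qed
qed

definition weight :: "(st list \<Rightarrow> act) \<Rightarrow> nat \<Rightarrow> st list \<Rightarrow> nat \<Rightarrow> real" where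
  "weight adv t h k = lam ^ good_joins adv h t k * potential (h!t) (h!k)"

definition running :: "nat \<Rightarrow> (st list \<Rightarrow> act) \<Rightarrow> nat \<Rightarrow> st list \<Rightarrow> nat \<Rightarrow> bool" where
  "running n0 adv t h m \<longleftrightarrow> t \<le> m \<and> m < length h \<and>
     (\<forall>u. t \<le> u \<and> u \<le> m \<longrightarrow> regular n0 (h!t) (h!u) \<and> good_joins adv h t u < 23 * card (allS (h!t)) + 4)"

text \<open>The weight process started at time \<open>t\<close> (and equal to \<open>1\<close> before), frozen from the first
  step at which the interval has ended or the good joins have reached \<open>23|S(t)| + 4\<close>.\<close>

primrec stopped_weight :: "nat \<Rightarrow> (st list \<Rightarrow> act) \<Rightarrow> nat \<Rightarrow> st list \<Rightarrow> nat \<Rightarrow> real" where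
  "stopped_weight n0 adv t h 0 = 1"
| "stopped_weight n0 adv t h (Suc k) =
     (if Suc k \<le> t then 1
      else if running n0 adv t h k then weight adv t h (Suc k) else stopped_weight n0 adv t h k)"

lemma good_joins_self: "good_joins adv h t t = 0"
  by (simp add: good_joins_def)

lemma good_joins_append:
  assumes "m \<le> length h"
  shows "good_joins adv (h @ [s]) t m = good_joins adv h t m"
proof -
  have "{m'. t \<le> m' \<and> m' < m \<and> adv (take (Suc m') (h @ [s])) = JoinGood} =
        {m'. t \<le> m' \<and> m' < m \<and> adv (take (Suc m') h) = JoinGood}"
    using assms by auto
  then show ?thesis by (simp add: good_joins_def)
qed

lemma good_joins_Suc:
  assumes "t \<le> n"
  shows "good_joins adv h t (Suc n)
         = good_joins adv h t n + (if adv (take (Suc n) h) = JoinGood then 1 else 0)"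
proof -
  let ?A = "{m. t \<le> m \<and> m < n \<and> adv (take (Suc m) h) = JoinGood}"
  have "finite ?A" by (rule finite_subset[of _ "{..<n}"]) auto
  moreover have "{m. t \<le> m \<and> m < Suc n \<and> adv (take (Suc m) h) = JoinGood}
      = (if adv (take (Suc n) h) = JoinGood then insert n ?A else ?A)"
    using assms by (auto simp: less_Suc_eq)
  ultimately show ?thesis by (simp add: good_joins_def)
qed

lemma running_append:
  assumes "m < length h"
  shows "running n0 adv t (h @ [s]) m = running n0 adv t h m"
proof -
  have "(h @ [s]) ! u = h ! u" "good_joins adv (h @ [s]) t u = good_joins adv h t u" if "u \<le> m" for u
    using assms that by (simp_all add: nth_append good_joins_append)
  then show ?thesis using assms unfolding running_def by auto
qed

lemma stopped_weight_append:
  assumes "k < length h"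
  shows "stopped_weight n0 adv t (h @ [s]) k = stopped_weight n0 adv t h k"
  using assms
proof (induction k)
  case (Suc k)
  then have "running n0 adv t (h @ [s]) k = running n0 adv t h k" by (intro running_append) simp
  moreover have "t < length h \<Longrightarrow> weight adv t (h @ [s]) (Suc k) = weight adv t h (Suc k)"
    using Suc.prems by (simp add: weight_def nth_append good_joins_append)
  ultimately show ?case using Suc by simp
qed simp

lemma stopped_weight_before: "n \<le> t \<Longrightarrow> stopped_weight n0 adv t h n = 1"
  by (cases n) auto

lemma stopped_weight_running:
  assumes "running n0 adv t h n"
  shows "stopped_weight n0 adv t h n = weight adv t h n"
proof (cases "n \<le> t")
  case True
  then have "n = t" using assms by (simp add: running_def)
  moreover have "potential (h!t) (h!t) = 1" by (rule potential_self)
  ultimately show ?thesis using True by (simp add: stopped_weight_before weight_def good_joins_self)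
next
  case False
  then obtain k where "n = Suc k" "running n0 adv t h k"
    using assms by (cases n) (auto simp: running_def)
  then show ?thesis using False by simp
qed

lemma stopped_weight_frozen:
  assumes "t < k" "\<forall>j\<ge>k. \<not> running n0 adv t h j" "k \<le> j"
  shows "stopped_weight n0 adv t h j = stopped_weight n0 adv t h k"
  using assms(3)
proof (induction j)
  case (Suc j)
  then show ?case using assms by (cases "k = Suc j") auto
qed simp

lemma nn_integral_stopped_weight_step:
  assumes "h \<noteq> []" "n0 \<ge> 1"
  shows "(\<integral>\<^sup>+ s. ennreal (stopped_weight n0 adv t (h @ [s]) (length h)) \<partial>step (adv h) (last h))
         \<le> ennreal (stopped_weight n0 adv t h (length h - 1))"
proof -
  define n where "n = length h - 1"
  have len: "length h = Suc n" using assms by (simp add: n_def)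
  have last: "last h = h ! n" using assms by (simp add: n_def last_conv_nth)
  have run_append: "running n0 adv t (h @ [s]) n = running n0 adv t h n" for s
    using len running_append[of n h] by simp
  show ?thesis
  proof (cases "running n0 adv t h n")
    case True
    have "t \<le> n" and reg: "regular n0 (h!t) (h!n)" using True by (auto simp: running_def)
    define J where "J = good_joins adv h t n"
    define j where "j = (if adv h = JoinGood then 1 else 0 :: nat)"
    have new: "stopped_weight n0 adv t (h @ [s]) (Suc n) = lam ^ J * (lam ^ j * potential (h!t) s)" for s
    proof -
      have "good_joins adv (h @ [s]) t (Suc n) = J + j"
        using good_joins_Suc[OF \<open>t \<le> n\<close>, of adv "h @ [s]"] good_joins_append[of n h adv s t] len
        by (simp add: J_def j_def)
      moreover have "(h @ [s]) ! t = h ! t" "(h @ [s]) ! Suc n = s" using len \<open>t \<le> n\<close> by (auto simp: nth_append)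
      ultimately show ?thesis using True run_append \<open>t \<le> n\<close> by (simp add: weight_def power_add)
    qed
    have "(\<integral>\<^sup>+ s. ennreal (stopped_weight n0 adv t (h @ [s]) (length h)) \<partial>step (adv h) (last h))
        = ennreal (lam ^ J) * (\<integral>\<^sup>+ s. ennreal (lam ^ j * potential (h!t) s) \<partial>step (adv h) (h ! n))"
      unfolding len new last
      by (subst nn_integral_cmult[symmetric])
        (auto intro!: nn_integral_cong simp: ennreal_mult' potential_nonneg lam_def)
    also have "\<dots> \<le> ennreal (lam ^ J) * ennreal (potential (h!t) (h!n))"
      using nn_integral_potential_step[OF reg \<open>n0 \<ge> 1\<close>] by (intro mult_left_mono) (auto simp: j_def)
    also have "\<dots> = ennreal (stopped_weight n0 adv t h n)"
      using stopped_weight_running[OF True]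
      by (simp add: weight_def J_def ennreal_mult' lam_def potential_nonneg)
    finally show ?thesis by (simp add: n_def)
  next
    case False
    have "stopped_weight n0 adv t (h @ [s]) (Suc n) = stopped_weight n0 adv t h n" for s
      using False run_append stopped_weight_append[of n h] len by (simp add: stopped_weight_before)
    then show ?thesis using len by simp
  qed
qed

lemma prob_stopped_weight_ge:
  assumes "n0 \<ge> 1" "c > 0"
  shows "measure_pmf.prob (traj adv s0 L) {h. c \<le> stopped_weight n0 adv t h (length h - 1)} \<le> 1 / c"
  using prob_traj_ge_le[where V = "\<lambda>h. stopped_weight n0 adv t h (length h - 1)"]
    nn_integral_stopped_weight_step assms by simp

lemma first_time_good_joins_ge:
  assumes "0 < K" "K < good_joins adv h t t'"
  obtains k where "t < k" "k < t'" "K \<le> good_joins adv h t k"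
    "\<forall>u. t \<le> u \<and> u < k \<longrightarrow> good_joins adv h t u < K"
proof -
  have "t < t'"
  proof (rule ccontr)
    assume "\<not> t < t'"
    then have "good_joins adv h t t' = 0" by (auto simp: good_joins_def card_eq_0_iff)
    with assms(2) show False by simp
  qed
  then obtain p where p: "t' = Suc p" "t \<le> p" by (cases t') auto
  have reach_p: "K \<le> good_joins adv h t p"
    using assms(2) good_joins_Suc[OF p(2), of adv h] unfolding p(1) by (simp split: if_splits)
  define k where "k = (LEAST k. t \<le> k \<and> K \<le> good_joins adv h t k)"
  have k: "t \<le> k \<and> K \<le> good_joins adv h t k"
    unfolding k_def by (rule LeastI[of _ p]) (use p reach_p in auto)
  show ?thesis
  proof (rule that)
    show "t < k" using k assms(1) by (cases "t = k") (auto simp: good_joins_self)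
    have "k \<le> p" unfolding k_def by (rule Least_le) (use p reach_p in auto)
    then show "k < t'" using p(1) by simp
    show "K \<le> good_joins adv h t k" using k ..
    show "\<forall>u. t \<le> u \<and> u < k \<longrightarrow> good_joins adv h t u < K"
      using not_less_Least[of _ "\<lambda>k. t \<le> k \<and> K \<le> good_joins adv h t k"]
      unfolding k_def[symmetric] by (meson not_le)
  qed
qed

lemma card_lt_of_small_drift:
  assumes "small_drift T x" "finite (allS T)" "finite (allS x)"
  shows "3 * card (allS x) < 8 * card (allS T)"
proof -
  let ?D = "allS x - allS T \<union> (allS T - allS x)"
  have "card (allS x) \<le> card (allS T \<union> ?D)" using assms by (intro card_mono) auto
  also have "\<dots> \<le> card (allS T) + card ?D" by (rule card_Un_le)
  finally show ?thesis using assms(1) unfolding small_drift_def by linarith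
qed

lemma two_le_lam_power_mu: "2 \<le> lam ^ 20 * mu"
proof -
  have "(6/5::real) ^ 20 = 3656158440062976 / 95367431640625" by (simp add: power_divide)
  then show ?thesis by (simp add: lam_def mu_def)
qed

text \<open>Here \<open>23 = 20 + 3\<close>: at most \<open>|S(T)|\<close> IDs of \<open>S(T)\<close> are lost and, by the small drift,
  fewer than \<open>3|S(T)|\<close> new good IDs are present.\<close>

lemma two_power_le_potential:
  assumes "small_drift T x" "finite (allS T)" "finite (allS x)"
    and "n \<le> card (allS T)" "23 * card (allS T) + 4 \<le> J"
  shows "2 ^ n \<le> lam ^ J * potential T x"
proof -
  define s where "s = card (allS T)"
  define lost where "lost = card (allS T - allS x)"
  define new where "new = card (goodS x - allS T)"
  have lost: "lost \<le> s" unfolding lost_def s_def using assms by (intro card_mono) auto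
  have "new \<le> card (allS x)" unfolding new_def using assms by (intro card_mono) (auto simp: allS_def)
  then have new: "new \<le> 3 * s" using card_lt_of_small_drift[OF assms(1-3)] by (simp add: s_def)
  have lam: "1 \<le> lam" and mu: "0 \<le> mu" "mu \<le> 1" by (auto simp: lam_def mu_def)
  have "2 ^ n \<le> (2::real) ^ s" using assms(4) by (intro power_increasing) (auto simp: s_def)
  also have "\<dots> \<le> (lam ^ 20 * mu) ^ s" using two_le_lam_power_mu by (intro power_mono) auto
  also have "\<dots> = lam ^ (20 * s) * mu ^ s" by (simp add: power_mult power_mult_distrib)
  also have "\<dots> \<le> lam ^ (20 * s + 4) * mu ^ s"
    using lam mu by (intro mult_right_mono power_increasing) auto
  also have "\<dots> = lam ^ (23 * s + 4) * (mu ^ s / lam ^ (3 * s))"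
  proof -
    have "lam ^ (23 * s + 4) = lam ^ (20 * s + 4) * lam ^ (3 * s)" by (simp add: power_add[symmetric])
    then show ?thesis using lam by simp
  qed
  also have "\<dots> \<le> lam ^ J * (mu ^ lost / lam ^ new)"
  proof (rule mult_mono)
    show "lam ^ (23 * s + 4) \<le> lam ^ J" using lam assms(5) by (intro power_increasing) (auto simp: s_def)
    show "mu ^ s / lam ^ (3 * s) \<le> mu ^ lost / lam ^ new"
      using lam mu lost new by (intro frac_le power_decreasing power_increasing) auto
  qed (use lam mu in auto)
  finally show ?thesis by (simp add: potential_def lost_def new_def)
qed

lemma card_allS_ge:
  assumes "invs n0 x" "wf_init x"
  shows "n0 \<le> card (allS x)"
proof -
  have "n0 \<le> card (goodS x)" using assms(1) by (simp add: invs_def)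
  also have "\<dots> \<le> card (allS x)" using assms(2) by (intro card_mono) (auto simp: wf_init_def allS_def)
  finally show ?thesis .
qed

lemma regular_within_interval:
  assumes adm: "admissible n0 L adv s0" and "n0 \<ge> 1"
    and h: "h \<in> set_pmf (traj adv s0 L)" and ends: "ends_at h t t'" and u: "t \<le> u" "u < t'"
  shows "regular n0 (h!t) (h!u)"
proof -
  have wf0: "wf_init s0" using adm by (simp add: admissible_def)
  have "length h = Suc L" using length_traj[OF h] .
  then have uL: "u \<le> L" and tL: "t \<le> L" using ends u by (auto simp: ends_at_def)
  have inv: "invs n0 (h!i)" if "i \<le> L" for i using adm h that by (simp add: admissible_def)
  note wf = wf_init_traj[OF h wf0]
  have wf_t: "wf_init (h!t)" and wf_u: "wf_init (h!u)" using wf tL uL by auto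
  then have finT: "finite (allS (h!t))" by (simp add: wf_init_def allS_def)
  have "small_drift (h!t) (h!u)"
  proof (cases "u = t")
    case True
    then show ?thesis using card_allS_ge[OF inv[OF tL] wf_t] \<open>n0 \<ge> 1\<close> by (simp add: small_drift_def)
  next
    case False
    then have "t < u" using u by simp
    then have "\<not> 8 * card (allS (h!u) - allS (h!t) \<union> (allS (h!t) - allS (h!u))) \<ge> 5 * card (allS (h!u))"
      using ends u(2) unfolding ends_at_def by blast
    then show ?thesis by (simp add: small_drift_def not_le)
  qed
  moreover have "\<forall>y\<in>allS (h!t). y < ctr (h!u)"
  proof
    fix y assume "y \<in> allS (h!t)"
    then have "y < ctr (h!t)" using wf_t by (simp add: wf_init_def)
    also have "ctr (h!t) \<le> ctr (h!u)" using wf u uL by blast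
    finally show "y < ctr (h!u)" .
  qed
  ultimately show ?thesis using inv[OF uL] wf_u finT by (simp add: regular_def)
qed

lemma two_power_le_stopped_weight:
  assumes adm: "admissible n0 L adv s0" and "n0 \<ge> 1"
    and h: "h \<in> set_pmf (traj adv s0 L)" and ends: "ends_at h t t'"
    and many: "23 * card (allS (h!t)) + 4 < good_joins adv h t t'"
  shows "2 ^ n0 \<le> stopped_weight n0 adv t h L"
proof -
  define K where "K = 23 * card (allS (h!t)) + 4"
  have "0 < K" "K < good_joins adv h t t'" using many by (simp_all add: K_def)
  then obtain k where k: "t < k" "k < t'" "K \<le> good_joins adv h t k"
    and below: "\<forall>u. t \<le> u \<and> u < k \<longrightarrow> good_joins adv h t u < K"
    by (rule first_time_good_joins_ge)
  have "length h = Suc L" by (rule length_traj[OF h])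
  then have "t' \<le> L" using ends by (simp add: ends_at_def)
  have reg: "regular n0 (h!t) (h!u)" if "t \<le> u" "u \<le> k" for u
    using regular_within_interval[OF adm \<open>n0 \<ge> 1\<close> h ends] that k(2) by simp
  obtain k' where k': "k = Suc k'" using k(1) by (cases k) auto
  have run: "running n0 adv t h k'"
    unfolding running_def K_def[symmetric]
  proof (intro conjI allI impI)
    show "t \<le> k'" "k' < length h" using k k' \<open>length h = Suc L\<close> \<open>t' \<le> L\<close> by simp_all
  next
    fix u assume u: "t \<le> u \<and> u \<le> k'"
    then show "regular n0 (h!t) (h!u)" using reg k' by simp
    show "good_joins adv h t u < K" using below u k' by simp
  qed
  have stops: "\<not> running n0 adv t h j" if "k \<le> j" for j
  proof
    assume "running n0 adv t h j"
    then have "good_joins adv h t k < K" using k(1) that unfolding running_def K_def[symmetric] by simp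
    with k(3) show False by simp
  qed
  have "stopped_weight n0 adv t h L = stopped_weight n0 adv t h k"
    by (rule stopped_weight_frozen[OF k(1)]) (use stops k(2) \<open>t' \<le> L\<close> in auto)
  also have "\<dots> = weight adv t h k" using run k(1) k' by simp
  finally have "stopped_weight n0 adv t h L = weight adv t h k" .
  moreover have "2 ^ n0 \<le> weight adv t h k"
  proof -
    have reg_t: "regular n0 (h!t) (h!t)" and reg_k: "regular n0 (h!t) (h!k)" using reg k(1) by simp_all
    have "n0 \<le> card (allS (h!t))" using reg_t card_allS_ge by (simp add: regular_def)
    moreover have "finite (allS (h!k))" using reg_k by (simp add: regular_def wf_init_def allS_def)
    ultimately show ?thesis unfolding weight_def
      using reg_k k(3) by (intro two_power_le_potential) (simp_all add: regular_def K_def)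
  qed
  ultimately show ?thesis by simp
qed

lemma prob_many_good_joins_le:
  assumes adm: "admissible n0 L adv s0" and "n0 \<ge> 1"
  shows "measure_pmf.prob (traj adv s0 L)
           {h. \<exists>t t'. is_interval h t t' \<and>
                 real (good_joins adv h t t') > 23 * real (card (allS (h ! t))) + 4}
         \<le> real (Suc L) / 2 ^ n0"
proof -
  let ?M = "traj adv s0 L"
  let ?E = "{h. \<exists>t t'. is_interval h t t' \<and>
                 real (good_joins adv h t t') > 23 * real (card (allS (h ! t))) + 4}"
  define A where "A t = {h. (2::real) ^ n0 \<le> stopped_weight n0 adv t h (length h - 1)}" for t
  have "?E \<inter> set_pmf ?M \<subseteq> (\<Union>t\<in>{..L}. A t)"
  proof
    fix h assume "h \<in> ?E \<inter> set_pmf ?M"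
    then obtain t t' where h: "h \<in> set_pmf ?M" and ends: "ends_at h t t'"
      and many: "23 * card (allS (h!t)) + 4 < good_joins adv h t t'"
      by (auto simp: is_interval_def)
    have "length h = Suc L" using length_traj[OF h] .
    moreover from this have "t \<le> L" using ends by (auto simp: ends_at_def)
    moreover have "2 ^ n0 \<le> stopped_weight n0 adv t h L"
      by (rule two_power_le_stopped_weight[OF adm \<open>n0 \<ge> 1\<close> h ends many])
    ultimately show "h \<in> (\<Union>t\<in>{..L}. A t)" by (auto simp: A_def)
  qed
  then have "measure_pmf.prob ?M ?E \<le> measure_pmf.prob ?M (\<Union>t\<in>{..L}. A t)"
    by (subst measure_Int_set_pmf[symmetric]) (rule measure_pmf.finite_measure_mono, simp_all)
  also have "\<dots> \<le> (\<Sum>t\<in>{..L}. measure_pmf.prob ?M (A t))"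
    by (rule measure_pmf.finite_measure_subadditive_finite) auto
  also have "\<dots> \<le> (\<Sum>t\<in>{..L}. 1 / 2 ^ n0)"
    unfolding A_def using \<open>n0 \<ge> 1\<close> by (intro sum_mono prob_stopped_weight_ge) auto
  also have "\<dots> = real (Suc L) / 2 ^ n0" by simp
  finally show ?thesis .
qed

lemma eventually_poly_le_two_power:
  "eventually (\<lambda>n::nat. real n * (real n powr \<gamma> + 1) \<le> 2 ^ n) sequentially"
  by real_asymp

theorem lemma3:
  fixes \<gamma> :: real
  assumes "\<gamma> > 0"
  shows "\<exists>C N. \<forall>n0 \<ge> N. \<forall>adv s0. n0 \<ge> 40 \<and> admissible n0 (lifetime \<gamma> n0) adv s0 \<longrightarrow>
           measure_pmf.prob (traj adv s0 (lifetime \<gamma> n0))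
             {h. \<exists>t t'. is_interval h t t' \<and>
                   real (good_joins adv h t t') > 23 * real (card (allS (h ! t))) + 4}
           \<le> C / real n0"
proof -
  obtain N where N: "\<And>n. n \<ge> N \<Longrightarrow> real n * (real n powr \<gamma> + 1) \<le> 2 ^ n"
    using eventually_poly_le_two_power[of \<gamma>] by (auto simp: eventually_sequentially)
  have "measure_pmf.prob (traj adv s0 (lifetime \<gamma> n0))
          {h. \<exists>t t'. is_interval h t t' \<and>
                real (good_joins adv h t t') > 23 * real (card (allS (h ! t))) + 4}
        \<le> 1 / real n0"
    if "n0 \<ge> N" "n0 \<ge> 40" and adm: "admissible n0 (lifetime \<gamma> n0) adv s0" for n0 adv s0
  proof -
    define L where "L = lifetime \<gamma> n0"
    have "real n0 * real (Suc L) \<le> real n0 * (real n0 powr \<gamma> + 1)"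
      by (intro mult_left_mono) (auto simp: L_def lifetime_def)
    also have "\<dots> \<le> 2 ^ n0" using N \<open>n0 \<ge> N\<close> by simp
    finally have "real (Suc L) / 2 ^ n0 \<le> 1 / real n0"
      using \<open>n0 \<ge> 40\<close> by (simp add: field_simps mult.commute)
    then show ?thesis
      using prob_many_good_joins_le[of n0 L adv s0] adm \<open>n0 \<ge> 40\<close> unfolding L_def by simp
  qed
  then show ?thesis by blast
qed

end
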